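(* Let $G$ be a finite, simple, connected graph with $res_{wt}(G)=k$. Then every two vertices of $G$ have at most $k-2$ common neighbors.
   Context: $d(x,y)$ is the shortest-path distance. A set $W\subseteq V(G)$ is a resolving set if for every two distinct vertices $y,z$ there is $x\in W$ with $d(y,x)\ne d(z,x)$. A set $W$ is a weak total resolving set (WTR-set) if $W$ is resolving and, for every $w\in W$ and every $x\in V(G)\setminus W$, there is $w'\in W\setminus\{w\}$ with $d(x,w')\ne d(w,w')$. The weak total resolving number $res_{wt}(G)$ is the minimum positive integer $r$ such that every set of $r$ vertices of $G$ is a WTR-set for $G$. *)

theory Defs
  imports Main
begin

definition simple_graph :: "'a set \<Rightarrow> ('a \<Rightarrow> 'a \<Rightarrow> bool) \<Rightarrow> bool" where
  "simple_graph V E \<longleftrightarrow> finite V \<and> V \<noteq> {} \<and>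
     (\<forall>x y. E x y \<longrightarrow> x \<in> V \<and> y \<in> V) \<and>
     (\<forall>x y. E x y \<longrightarrow> E y x) \<and> (\<forall>x. \<not> E x x)"

definition walk_len :: "'a set \<Rightarrow> ('a \<Rightarrow> 'a \<Rightarrow> bool) \<Rightarrow> 'a \<Rightarrow> 'a \<Rightarrow> nat \<Rightarrow> bool" where
  "walk_len V E x y n \<longleftrightarrow> (\<exists>p. length p = Suc n \<and> hd p = x \<and> last p = y \<and> set p \<subseteq> V \<and>
       (\<forall>i<n. E (p ! i) (p ! Suc i)))"

definition graph_connected :: "'a set \<Rightarrow> ('a \<Rightarrow> 'a \<Rightarrow> bool) \<Rightarrow> bool" where
  "graph_connected V E \<longleftrightarrow> (\<forall>x\<in>V. \<forall>y\<in>V. \<exists>n. walk_len V E x y n)"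

definition gdist :: "'a set \<Rightarrow> ('a \<Rightarrow> 'a \<Rightarrow> bool) \<Rightarrow> 'a \<Rightarrow> 'a \<Rightarrow> nat" where
  "gdist V E x y = (LEAST n. walk_len V E x y n)"

definition resolving_set :: "'a set \<Rightarrow> ('a \<Rightarrow> 'a \<Rightarrow> bool) \<Rightarrow> 'a set \<Rightarrow> bool" where
  "resolving_set V E W \<longleftrightarrow> W \<subseteq> V \<and>
     (\<forall>y\<in>V. \<forall>z\<in>V. y \<noteq> z \<longrightarrow> (\<exists>x\<in>W. gdist V E y x \<noteq> gdist V E z x))"

definition wtr_set :: "'a set \<Rightarrow> ('a \<Rightarrow> 'a \<Rightarrow> bool) \<Rightarrow> 'a set \<Rightarrow> bool" where
  "wtr_set V E W \<longleftrightarrow> resolving_set V E W \<and>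
     (\<forall>w\<in>W. \<forall>x\<in>V - W. \<exists>w'\<in>W - {w}. gdist V E x w' \<noteq> gdist V E w w')"

definition res_wt :: "'a set \<Rightarrow> ('a \<Rightarrow> 'a \<Rightarrow> bool) \<Rightarrow> nat" where
  "res_wt V E = (LEAST r. 0 < r \<and> (\<forall>W. W \<subseteq> V \<and> card W = r \<longrightarrow> wtr_set V E W))"

end

theory Submission
  imports Defs
begin

text \<open>Take \<open>W\<close> to be \<open>u\<close> together with \<open>k - 1\<close> common neighbours of \<open>u\<close> and \<open>v\<close>.
  Every vertex of \<open>W - {u}\<close> is at distance 1 from both \<open>u\<close> and \<open>v\<close>, so no such vertex
  separates the outside vertex \<open>v\<close> from \<open>u\<close>, and \<open>W\<close> is not a WTR-set.\<close>

lemma gdist_adjacent: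
  assumes "simple_graph V E" "E x y"
  shows "gdist V E x y = 1"
proof -
  have xy: "x \<noteq> y" "x \<in> V" "y \<in> V" using assms unfolding simple_graph_def by auto
  have no_walk_0: "\<not> walk_len V E x y 0"
  proof
    assume "walk_len V E x y 0"
    then obtain p where "length p = 1" "hd p = x" "last p = y" unfolding walk_len_def by auto
    then show False using xy by (cases p) auto
  qed
  have "walk_len V E x y 1"
    unfolding walk_len_def using assms(2) xy by (intro exI[of _ "[x, y]"]) auto
  then show ?thesis
    unfolding gdist_def
  proof (rule Least_equality)
    fix m assume "walk_len V E x y m"
    then show "1 \<le> m" using no_walk_0 by (cases m) auto
  qed
qed

lemma res_wt_pos_and_wtr_set:
  assumes "finite V"
  shows "0 < res_wt V E \<and> (\<forall>W. W \<subseteq> V \<and> card W = res_wt V E \<longrightarrow> wtr_set V E W)"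
proof -
  let ?P = "\<lambda>r. 0 < r \<and> (\<forall>W. W \<subseteq> V \<and> card W = r \<longrightarrow> wtr_set V E W)"
  (* no subset of V has card V + 1 elements, so the LEAST is not taken over an empty set *)
  have "?P (Suc (card V))"
  proof (intro conjI allI impI)
    fix W assume W: "W \<subseteq> V \<and> card W = Suc (card V)"
    then have "card W \<le> card V" using card_mono[OF assms] by blast
    with W have False by linarith
    then show "wtr_set V E W" ..
  qed simp
  then have "?P (LEAST r. ?P r)" by (rule LeastI)
  then show ?thesis unfolding res_wt_def .
qed

lemma wtr_set_not_within_common_neighbours:
  assumes "simple_graph V E" "wtr_set V E W" "u \<in> W" "v \<in> V - W"
  shows "\<not> W - {u} \<subseteq> {x. E u x \<and> E v x}"
proof
  assume common: "W - {u} \<subseteq> {x. E u x \<and> E v x}"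
  obtain w where w: "w \<in> W - {u}" "gdist V E v w \<noteq> gdist V E u w"
    using assms(2-4) unfolding wtr_set_def by blast
  then have "E u w" "E v w" using common by blast+
  then show False using w(2) gdist_adjacent[OF assms(1)] by simp
qed

theorem lemma2:
  fixes V :: "'a set" and E :: "'a \<Rightarrow> 'a \<Rightarrow> bool" and k :: nat and u v :: 'a
  assumes "simple_graph V E" and "graph_connected V E" and "res_wt V E = k"
    and "u \<in> V" and "v \<in> V" and "u \<noteq> v"
  shows "int (card {x \<in> V. E u x \<and> E v x}) \<le> int k - 2"
proof (rule ccontr)
  define N where "N = {x \<in> V. E u x \<and> E v x}"
  assume "\<not> ?thesis"
  then have "k - 1 \<le> card N" unfolding N_def by linarith
  then obtain T where T: "T \<subseteq> N" "card T = k - 1" "finite T"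
    using obtain_subset_with_card_n by blast
  have loopless: "u \<notin> N" "v \<notin> N"
    using assms(1) unfolding N_def simple_graph_def by auto
  have "finite V" using assms(1) unfolding simple_graph_def by blast
  then have k: "0 < k" "\<And>W. W \<subseteq> V \<Longrightarrow> card W = k \<Longrightarrow> wtr_set V E W"
    using res_wt_pos_and_wtr_set[of V E] unfolding assms(3) by auto
  have "u \<notin> T" using T(1) loopless(1) by blast
  then have "card (insert u T) = k" using T(2,3) k(1) by simp
  moreover have "insert u T \<subseteq> V" using T(1) assms(4) unfolding N_def by blast
  ultimately have wtr: "wtr_set V E (insert u T)" using k(2) by blast
  have outside: "v \<in> V - insert u T" using T(1) loopless assms(5,6) by blast
  have "insert u T - {u} \<subseteq> {x. E u x \<and> E v x}" using T(1) unfolding N_def by blast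
  with wtr_set_not_within_common_neighbours[OF assms(1) wtr insertI1 outside] show False ..
qed

end
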